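(* Let $m\ge 2$ and $1\le k\le 2^m$ be integers, and let $\mathcal B$ be a nonempty set of $k$-element subsets of $\mathrm{PG}(1,2^m)$ that is invariant under the action of $\mathrm{PGL}_2(\mathrm{GF}(2^m))$ (i.e. $\pi(B)\in\mathcal B$ for all $B\in\mathcal B$ and all $\pi\in \mathrm{PGL}_2(\mathrm{GF}(2^m))$). Let $\mathbb D=(\mathrm{PG}(1,2^m),\mathcal B)$. Then the $2$-rank of $\mathbb D$ is $2^m$ if $k$ is even and $2^m+1$ if $k$ is odd.
   Context: $\mathrm{PGL}_2(\mathrm{GF}(2^m))$ acts on $\mathrm{PG}(1,2^m)=\mathrm{GF}(2^m)\cup\{\infty\}$ by linear fractional transformations. The $2$-rank of an incidence structure $(X,\mathcal B)$ is the rank over $\mathrm{GF}(2)$ of its $|\mathcal B|\times|X|$ $(0,1)$-incidence matrix (entry $1$ iff the point lies in the block). *)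

theory Defs
  imports Main "HOL.Vector_Spaces" "HOL-Library.Z2" "HOL-Library.Function_Algebras"
begin

text \<open>The projective line PG(1,q) over a finite field 'a is modelled as 'a option,
  with None playing the role of the point at infinity.\<close>

definition lft :: "'a::field \<Rightarrow> 'a \<Rightarrow> 'a \<Rightarrow> 'a \<Rightarrow> 'a option \<Rightarrow> 'a option" where
  "lft a b c d p = (case p of
      None \<Rightarrow> (if c = 0 then None else Some (a / c))
    | Some x \<Rightarrow> (if c * x + d = 0 then None else Some ((a * x + b) / (c * x + d))))"

definition PGL2 :: "('a::field option \<Rightarrow> 'a option) set" where
  "PGL2 = {lft a b c d | a b c d. a * d - b * c \<noteq> 0}"

definition scaleF :: "bit \<Rightarrow> ('p \<Rightarrow> bit) \<Rightarrow> ('p \<Rightarrow> bit)" where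
  "scaleF c f = (\<lambda>x. c * f x)"

lemma vector_space_scaleF: "vector_space scaleF"
  by unfold_locales (auto simp: scaleF_def fun_eq_iff algebra_simps)

definition incvec :: "'p set \<Rightarrow> ('p \<Rightarrow> bit)" where
  "incvec B = (\<lambda>x. if x \<in> B then 1 else 0)"

text \<open>2-rank of the incidence structure (UNIV, Bs): the GF(2)-rank of the incidence
  matrix, i.e. the dimension of the span of its rows.\<close>
definition two_rank :: "'p set set \<Rightarrow> nat" where
  "two_rank Bs = vector_space.dim scaleF (incvec ` Bs)"

end

theory Submission
  imports Defs "HOL-Library.Cardinality"
begin

(* Let q = 2^m and write e_S for the incidence vector of S. Since q - 1 is odd, the sum of
   e_(aB) over all dilations x \<mapsto> a x (a \<noteq> 0) agrees with e_B at the fixed points 0 and \<infinity> and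
   is constant on all other points. Adding these sums for a block through 0 avoiding \<infinity> and a
   block through \<infinity> avoiding 0 (both exist because PGL_2 is 2-transitive) the constants cancel,
   so e_0 + e_\<infinity>, and by 2-transitivity every e_p + e_q, lies in the span of the blocks.
   The vectors e_p + e_q span the q-dimensional space of even-weight vectors. A block vector has
   weight k, so the blocks span exactly that space when k is even, and everything when k is
   odd. *)

section \<open>Incidence vectors over GF(2)\<close>

interpretation gf2: vector_space scaleF
  by (rule vector_space_scaleF)

lemma sum_fun_apply: "(\<Sum>i\<in>A. f i) x = (\<Sum>i\<in>A. f i x)"
  by (induction A rule: infinite_finite_induct) auto

lemma bit_fun_add_self [simp]: "(f :: 'p \<Rightarrow> bit) + f = 0"
  by (simp add: fun_eq_iff)

lemma scaleF_of_nat: "scaleF (of_nat n) f = (if even n then 0 else f)"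
proof -
  have "(of_nat n :: bit) = of_bool (odd n)"
    by (induction n) auto
  then show ?thesis
    by (simp add: scaleF_def fun_eq_iff)
qed

lemma incvec_insert: "x \<notin> B \<Longrightarrow> incvec (insert x B) = incvec {x} + incvec B"
  by (auto simp: incvec_def fun_eq_iff)

lemma inj_incvec_singleton: "inj (\<lambda>p. incvec {p})"
  by (rule injI) (metis incvec_def singleton_iff zero_neq_one)

lemma gf2_independent_unit_vectors: "gf2.independent (range (\<lambda>p::'p. incvec {p}))"
  unfolding gf2.independent_explicit_finite_subsets
proof (intro allI impI ballI)
  fix T c v
  assume T: "T \<subseteq> range (\<lambda>p::'p. incvec {p})" "finite T"
    and zero: "(\<Sum>v\<in>T. scaleF (c v) v) = 0" and "v \<in> T"
  then obtain p where p: "v = incvec {p}" by auto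
  have "(\<Sum>w\<in>T. scaleF (c w) w) p = (\<Sum>w\<in>T. if w = v then c w else 0)"
    unfolding sum_fun_apply scaleF_def
  proof (rule sum.cong)
    fix w assume "w \<in> T"
    then obtain q where "w = incvec {q}" using T(1) by auto
    then show "c w * w p = (if w = v then c w else 0)"
      using inj_incvec_singleton[THEN inj_eq, of q p] by (auto simp: p incvec_def)
  qed simp
  then show "c v = 0"
    using zero T(2) \<open>v \<in> T\<close> by simp
qed

lemma gf2_span_unit_vectors: "gf2.span (range (\<lambda>p::'p::finite. incvec {p})) = UNIV"
proof -
  have "f \<in> gf2.span (range (\<lambda>p. incvec {p}))" for f :: "'p \<Rightarrow> bit"
  proof -
    have "scaleF (f p) (incvec {p}) x = (if p = x then f x else 0)" for p x
      by (simp add: scaleF_def incvec_def)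
    then have "f = (\<Sum>p\<in>UNIV. scaleF (f p) (incvec {p}))"
      by (simp add: fun_eq_iff sum_fun_apply)
    also have "\<dots> \<in> gf2.span (range (\<lambda>p. incvec {p}))"
      by (intro gf2.span_sum gf2.span_scale gf2.span_base) simp
    finally show ?thesis .
  qed
  then show ?thesis by auto
qed

interpretation gf2_fin: finite_dimensional_vector_space
  "scaleF :: bit \<Rightarrow> ('p::finite \<Rightarrow> bit) \<Rightarrow> _" "range (\<lambda>p. incvec {p})"
  by unfold_locales (simp_all add: gf2_independent_unit_vectors gf2_span_unit_vectors)

lemma gf2_dim_UNIV: "gf2.dim (UNIV :: ('p::finite \<Rightarrow> bit) set) = CARD('p)"
  unfolding gf2_fin.dim_UNIV by (rule card_image[OF inj_incvec_singleton])

definition pairs_through :: "'p \<Rightarrow> ('p \<Rightarrow> bit) set" where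
  "pairs_through z = (\<lambda>p. incvec {p, z}) ` (- {z})"

lemma incvec_add_singleton_in_span_pairs_through:
  "incvec {p} + incvec {z} \<in> gf2.span (pairs_through z)"
proof (cases "p = z")
  case True
  then show ?thesis by (simp add: gf2.span_zero)
next
  case False
  then have "incvec {p} + incvec {z} = incvec {p, z}"
    by (simp add: incvec_insert[of p "{z}"])
  with False have "incvec {p} + incvec {z} \<in> pairs_through z"
    by (simp add: pairs_through_def)
  then show ?thesis by (rule gf2.span_base)
qed

lemma card_pairs_through: "card (pairs_through (z::'p::finite)) = CARD('p) - 1"
proof -
  have "inj_on (\<lambda>p. incvec {p, z}) (- {z})"
    by (rule inj_onI) (metis ComplD incvec_def insert_iff zero_neq_one)
  then show ?thesis
    by (simp add: pairs_through_def card_image Compl_eq_Diff_UNIV card_Diff_singleton)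
qed

lemma incvec_singleton_notin_pairs_through: "incvec {z} \<notin> pairs_through z"
proof
  assume "incvec {z} \<in> pairs_through z"
  then obtain p where "p \<noteq> z" "incvec {z} = incvec {p, z}"
    by (auto simp: pairs_through_def)
  then have "incvec {z} p = incvec {p, z} p" by simp
  with \<open>p \<noteq> z\<close> show False by (simp add: incvec_def)
qed

lemma gf2_span_insert_pairs_through:
  "gf2.span (insert (incvec {z}) (pairs_through (z::'p::finite))) = UNIV"
proof -
  have "incvec {p} \<in> gf2.span (insert (incvec {z}) (pairs_through z))" for p
  proof -
    have "incvec {p} = (incvec {p} + incvec {z}) + incvec {z}"
      by (simp add: add.assoc)
    also have "\<dots> \<in> gf2.span (insert (incvec {z}) (pairs_through z))"
    proof (rule gf2.span_add)
      show "incvec {p} + incvec {z} \<in> gf2.span (insert (incvec {z}) (pairs_through z))"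
        by (rule subsetD[OF gf2.span_mono[OF subset_insertI]
              incvec_add_singleton_in_span_pairs_through])
    qed (simp add: gf2.span_base)
    finally show ?thesis .
  qed
  then have "gf2.span (range (\<lambda>p::'p. incvec {p}))
      \<subseteq> gf2.span (insert (incvec {z}) (pairs_through z))"
    by (intro gf2.span_minimal gf2.subspace_span) auto
  then show ?thesis
    by (simp add: gf2_span_unit_vectors top.extremum_unique)
qed

lemma gf2_independent_insert_pairs_through:
  "gf2.independent (insert (incvec {z}) (pairs_through (z::'p::finite)))"
proof (rule gf2_fin.card_le_dim_spanning[where V=UNIV])
  show "insert (incvec {z}) (pairs_through z) \<subseteq> UNIV" by simp
  show "UNIV \<subseteq> gf2.span (insert (incvec {z}) (pairs_through z))"
    by (simp add: gf2_span_insert_pairs_through)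
  have "finite (pairs_through z)"
    by (simp add: pairs_through_def)
  then show "finite (insert (incvec {z}) (pairs_through z))"
    by simp
  have "card (insert (incvec {z}) (pairs_through z)) = Suc (CARD('p) - 1)"
    using card.insert[OF \<open>finite (pairs_through z)\<close> incvec_singleton_notin_pairs_through]
    by (simp only: card_pairs_through)
  also have "\<dots> = CARD('p)"
    by simp
  also have "\<dots> = gf2.dim (UNIV :: ('p \<Rightarrow> bit) set)"
    by (rule gf2_dim_UNIV[symmetric])
  finally show "card (insert (incvec {z}) (pairs_through z)) \<le> gf2.dim (UNIV :: ('p \<Rightarrow> bit) set)"
    by (rule eq_imp_le)
qed

lemma incvec_add_in_span_pairs_through:
  "finite B \<Longrightarrow> incvec B + scaleF (of_nat (card B)) (incvec {z}) \<in> gf2.span (pairs_through z)"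
proof (induction B rule: finite_induct)
  case empty
  have "incvec {} + scaleF (of_nat (card {})) (incvec {z}) = 0"
    by (simp add: incvec_def scaleF_def fun_eq_iff)
  then show ?case
    by (metis gf2.span_zero)
next
  case (insert x B)
  have "incvec (insert x B) + scaleF (of_nat (card (insert x B))) (incvec {z})
      = (incvec {x} + incvec {z}) + (incvec B + scaleF (of_nat (card B)) (incvec {z}))"
    using insert.hyps
    by (simp add: incvec_insert[OF insert.hyps(2)] gf2.scale_left_distrib add_ac)
  also have "\<dots> \<in> gf2.span (pairs_through z)"
    by (intro gf2.span_add incvec_add_singleton_in_span_pairs_through insert.IH)
  finally show ?case .
qed

lemma span_incvec_eq_span_pairs_through:
  assumes "pairs_through z \<subseteq> gf2.span (incvec ` Bs)"
    and "\<forall>B\<in>Bs. finite B \<and> even (card B)"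
  shows "gf2.span (incvec ` Bs) = gf2.span (pairs_through z)"
proof -
  have "incvec B \<in> gf2.span (pairs_through z)" if "B \<in> Bs" for B
    using incvec_add_in_span_pairs_through[of B z] assms(2) that by (simp add: scaleF_of_nat)
  then have "incvec ` Bs \<subseteq> gf2.span (pairs_through z)"
    by auto
  with assms(1) show ?thesis
    by (simp add: gf2.span_eq)
qed

lemma span_incvec_eq_UNIV:
  fixes Bs :: "'p::finite set set"
  assumes sub: "pairs_through z \<subseteq> gf2.span (incvec ` Bs)"
    and "B \<in> Bs" and "odd (card B)"
  shows "gf2.span (incvec ` Bs) = UNIV"
proof -
  have "incvec {z} = incvec B + (incvec B + incvec {z})"
    by (simp add: add.assoc[symmetric])
  also have "\<dots> \<in> gf2.span (incvec ` Bs)"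
  proof (rule gf2.span_add)
    show "incvec B \<in> gf2.span (incvec ` Bs)"
      using \<open>B \<in> Bs\<close> by (simp add: gf2.span_base)
    have "incvec B + incvec {z} \<in> gf2.span (pairs_through z)"
      using incvec_add_in_span_pairs_through[of B z] \<open>odd (card B)\<close> by (simp add: scaleF_of_nat)
    then show "incvec B + incvec {z} \<in> gf2.span (incvec ` Bs)"
      using gf2.span_minimal[OF sub gf2.subspace_span] by blast
  qed
  finally have "insert (incvec {z}) (pairs_through z) \<subseteq> gf2.span (incvec ` Bs)"
    using sub by simp
  then show ?thesis
    by (metis gf2.span_minimal gf2.subspace_span gf2_span_insert_pairs_through top.extremum_unique)
qed

lemma two_rank_eq_if_pairs_in_span:
  fixes Bs :: "'p::finite set set"
  assumes "Bs \<noteq> {}" and uniform: "\<forall>B\<in>Bs. card B = k"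
    and pairs: "\<And>p q. p \<noteq> q \<Longrightarrow> incvec {p, q} \<in> gf2.span (incvec ` Bs)"
  shows "two_rank Bs = (if even k then CARD('p) - 1 else CARD('p))"
proof -
  obtain z :: 'p where True by simp
  have sub: "pairs_through z \<subseteq> gf2.span (incvec ` Bs)"
    using pairs by (auto simp: pairs_through_def)
  show ?thesis
  proof (cases "even k")
    case True
    with uniform have "gf2.span (incvec ` Bs) = gf2.span (pairs_through z)"
      by (intro span_incvec_eq_span_pairs_through[OF sub]) simp
    then have "two_rank Bs = gf2.dim (pairs_through z)"
      unfolding two_rank_def by (rule gf2.span_eq_dim)
    also have "\<dots> = card (pairs_through z)"
      by (rule gf2.dim_eq_card_independent,
          rule gf2.independent_mono[OF gf2_independent_insert_pairs_through subset_insertI])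
    finally show ?thesis
      using True by (simp add: card_pairs_through)
  next
    case False
    obtain B where "B \<in> Bs" using \<open>Bs \<noteq> {}\<close> by auto
    with False uniform have "gf2.span (incvec ` Bs) = UNIV"
      by (intro span_incvec_eq_UNIV[OF sub \<open>B \<in> Bs\<close>]) simp
    then have "two_rank Bs = gf2.dim (UNIV :: ('p \<Rightarrow> bit) set)"
      unfolding two_rank_def by (metis gf2.dim_span)
    with False show ?thesis
      by (simp add: gf2_dim_UNIV del: gf2_fin.dim_UNIV)
  qed
qed

lemma incvec_image_bij: "bij g \<Longrightarrow> incvec (g ` B) = incvec B \<circ> inv g"
  by (auto simp: incvec_def fun_eq_iff bij_image_Collect_eq[of g "\<lambda>x. x \<in> B", simplified])

lemma span_incvec_comp_inv:
  assumes "bij g" and invariant: "\<forall>B\<in>Bs. g ` B \<in> Bs"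
    and "f \<in> gf2.span (incvec ` Bs)"
  shows "f \<circ> inv g \<in> gf2.span (incvec ` Bs)"
  using assms(3)
proof (induction rule: gf2.span_induct_alt)
  case base
  have "(0 :: 'a \<Rightarrow> bit) \<circ> inv g = 0"
    by (simp add: fun_eq_iff)
  then show ?case
    by (metis gf2.span_zero)
next
  case (step c x y)
  then obtain B where "B \<in> Bs" "x = incvec B" by auto
  then have "x \<circ> inv g \<in> incvec ` Bs"
    using invariant incvec_image_bij[OF \<open>bij g\<close>, of B] by (metis imageI)
  moreover have "(scaleF c x + y) \<circ> inv g = scaleF c (x \<circ> inv g) + (y \<circ> inv g)"
    by (simp add: scaleF_def fun_eq_iff)
  ultimately show ?case
    using step.IH by (metis gf2.span_add gf2.span_scale gf2.span_base)
qed

section \<open>The action of PGL(2,q) on the projective line\<close>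

lemma lft_left_inverse:
  fixes a b c d :: "'a::field"
  assumes det: "a * d - b * c \<noteq> 0"
  shows "lft d (- b) (- c) a (lft a b c d p) = p"
proof (cases p)
  case None
  then show ?thesis
    using det by (cases "c = 0") (auto simp: lft_def field_simps)
next
  case (Some x)
  show ?thesis
  proof (cases "c * x + d = 0")
    case True
    with det have "c \<noteq> 0" by auto
    moreover from True have "c * x = - d"
      by (simp add: eq_neg_iff_add_eq_0)
    ultimately show ?thesis
      using True by (simp add: Some lft_def field_simps)
  next
    case False
    define y where "y = (a * x + b) / (c * x + d)"
    have den: "- c * y + a = (a * d - b * c) / (c * x + d)"
      using False by (simp add: y_def field_simps)
    have num: "d * y + - b = (a * d - b * c) * x / (c * x + d)"
      using False by (simp add: y_def field_simps)
    have "lft a b c d p = Some y"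
      using False by (simp add: Some lft_def y_def)
    moreover have "lft d (- b) (- c) a (Some y) = Some x"
      unfolding lft_def option.case den num using False det by simp
    ultimately show ?thesis
      by (simp add: Some)
  qed
qed

lemma lft_in_PGL2: "a * d - b * c \<noteq> 0 \<Longrightarrow> lft a b c d \<in> PGL2"
  unfolding PGL2_def by blast

lemma PGL2_inverse:
  assumes "g \<in> PGL2"
  shows "\<exists>h\<in>PGL2. (\<forall>p. h (g p) = p) \<and> (\<forall>p. g (h p) = p)"
proof -
  from assms obtain a b c d where g: "g = lft a b c d" and det: "a * d - b * c \<noteq> 0"
    unfolding PGL2_def by blast
  have det': "d * a - (- b) * (- c) \<noteq> 0"
    using det by (simp add: algebra_simps)
  show ?thesis
  proof (intro bexI conjI allI)
    show "lft d (- b) (- c) a \<in> PGL2"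
      by (rule lft_in_PGL2[OF det'])
    show "lft d (- b) (- c) a (g p) = p" for p
      unfolding g by (rule lft_left_inverse[OF det])
    show "g (lft d (- b) (- c) a p) = p" for p
      using lft_left_inverse[OF det', of p] by (simp add: g)
  qed
qed

lemma bij_PGL2: "g \<in> PGL2 \<Longrightarrow> bij g"
  by (metis PGL2_inverse bij_betw_byWitness top_greatest image_subset_iff)

lemma PGL2_from_zero_infinity:
  assumes "p \<noteq> q"
  shows "\<exists>g\<in>PGL2. g (Some 0) = p \<and> g None = q"
proof (cases p)
  case None
  with assms obtain v where "q = Some v" by (cases q) auto
  then show ?thesis
    by (intro bexI[of _ "lft v 1 1 0"]) (auto simp: None lft_def intro: lft_in_PGL2)
next
  case (Some u)
  show ?thesis
  proof (cases q)
    case None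
    then show ?thesis
      by (intro bexI[of _ "lft 1 u 0 1"]) (auto simp: Some lft_def intro: lft_in_PGL2)
  next
    case (Some v)
    with assms \<open>p = Some u\<close> have "v - u \<noteq> 0" by auto
    then show ?thesis
      by (intro bexI[of _ "lft v u 1 1"]) (auto simp: Some \<open>p = Some u\<close> lft_def intro: lft_in_PGL2)
  qed
qed

lemma PGL2_to_zero_infinity:
  assumes "p \<noteq> q"
  shows "\<exists>h\<in>PGL2. h p = Some 0 \<and> h q = None"
proof -
  obtain g where "g \<in> PGL2" "g (Some 0) = p" "g None = q"
    using PGL2_from_zero_infinity[OF assms] by blast
  moreover obtain h where "h \<in> PGL2" "\<forall>x. h (g x) = x"
    using PGL2_inverse[OF \<open>g \<in> PGL2\<close>] by blast
  ultimately show ?thesis by metis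
qed

definition dilation :: "'a::field \<Rightarrow> 'a option \<Rightarrow> 'a option" where
  "dilation a = map_option ((*) a)"

lemma dilation_in_PGL2:
  assumes "a \<noteq> 0"
  shows "dilation a \<in> PGL2"
proof -
  have "dilation a = lft a 0 0 1"
    by (auto simp: dilation_def lft_def fun_eq_iff split: option.split)
  with assms show ?thesis
    by (simp add: lft_in_PGL2)
qed

section \<open>Sums over the dilations\<close>

definition dilation_sum :: "'a::field option set \<Rightarrow> 'a option \<Rightarrow> bit" where
  "dilation_sum B = (\<Sum>a\<in>- {0}. incvec (dilation a ` B))"

lemma dilation_sum_in_span:
  assumes "\<forall>\<pi>\<in>PGL2. \<forall>B\<in>Bs. \<pi> ` B \<in> Bs" and "B \<in> Bs"
  shows "dilation_sum B \<in> gf2.span (incvec ` Bs)"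
  unfolding dilation_sum_def
  using assms dilation_in_PGL2 by (intro gf2.span_sum gf2.span_base) auto

lemma dilation_sum_fixed_point:
  fixes B :: "'a::{field,finite} option set"
  assumes even: "even CARD('a)" and x: "x = None \<or> x = Some 0"
  shows "dilation_sum B x = incvec B x"
proof -
  have "incvec (dilation a ` B) x = incvec B x" if "a \<noteq> 0" for a
  proof -
    have "dilation a x = x"
      using x by (auto simp: dilation_def)
    then show ?thesis
      using bij_is_inj[OF bij_PGL2[OF dilation_in_PGL2[OF that]]]
      by (metis incvec_def inj_image_mem_iff)
  qed
  then have "dilation_sum B x = of_nat (card (- {0 :: 'a})) * incvec B x"
    by (simp add: dilation_sum_def sum_fun_apply)
  moreover have "odd (card (- {0 :: 'a}))"
    using even by (simp add: Compl_eq_Diff_UNIV card_Diff_singleton)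
  ultimately show ?thesis
    using scaleF_of_nat[of "card (- {0 :: 'a})" "incvec B"] by (simp add: scaleF_def fun_eq_iff)
qed

lemma dilation_sum_Some:
  fixes B :: "'a::{field,finite} option set"
  assumes z: "z \<noteq> 0"
  shows "dilation_sum B (Some z) = of_nat (card {y. y \<noteq> 0 \<and> Some y \<in> B})"
proof -
  have "Some z \<in> dilation a ` B \<longleftrightarrow> Some (z / a) \<in> B" if "a \<noteq> 0" for a
  proof -
    have "Some z = dilation a (Some (z / a))"
      using that by (simp add: dilation_def)
    then show ?thesis
      using bij_is_inj[OF bij_PGL2[OF dilation_in_PGL2[OF that]]]
      by (metis inj_image_mem_iff)
  qed
  then have "dilation_sum B (Some z) = (\<Sum>a\<in>- {0}. if Some (z / a) \<in> B then 1 else 0)"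
    unfolding dilation_sum_def sum_fun_apply incvec_def by (intro sum.cong) auto
  also have "\<dots> = of_nat (card {a \<in> - {0}. Some (z / a) \<in> B})"
    by (simp add: sum.If_cases Int_def)
  also have "card {a \<in> - {0}. Some (z / a) \<in> B} = card {y. y \<noteq> 0 \<and> Some y \<in> B}"
    by (rule bij_betw_same_card[of "\<lambda>a. z / a"], rule bij_betw_byWitness[of _ "\<lambda>a. z / a"])
      (use z in auto)
  finally show ?thesis .
qed

lemma card_nonzero_Some_eq: "card {y. y \<noteq> 0 \<and> Some y \<in> B} = card (B - {None, Some 0})"
proof -
  have "B - {None, Some 0} = Some ` {y. y \<noteq> 0 \<and> Some y \<in> B}"
    by (auto elim: option.exhaust_sel)
  then show ?thesis
    by (simp add: card_image)
qed

lemma dilation_sum_add_eq: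
  fixes B1 B2 :: "'a::{field,finite} option set"
  assumes even: "even CARD('a)" and "card B1 = card B2"
    and B1: "Some 0 \<in> B1" "None \<notin> B1" and B2: "None \<in> B2" "Some 0 \<notin> B2"
  shows "dilation_sum B1 + dilation_sum B2 = incvec {Some 0, None}"
proof
  fix x :: "'a option"
  show "(dilation_sum B1 + dilation_sum B2) x = incvec {Some 0, None} x"
  proof (cases "x = None \<or> x = Some 0")
    case True
    then show ?thesis
      using B1 B2 by (auto simp: dilation_sum_fixed_point[OF even] incvec_def)
  next
    case False
    then obtain z where z: "x = Some z" "z \<noteq> 0"
      by (cases x) auto
    have "B1 - {None, Some 0} = B1 - {Some 0}" "B2 - {None, Some 0} = B2 - {None}"
      using B1 B2 by auto
    then have "card {y. y \<noteq> 0 \<and> Some y \<in> B1} = card {y. y \<noteq> 0 \<and> Some y \<in> B2}"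
      using B1 B2 \<open>card B1 = card B2\<close> by (simp add: card_nonzero_Some_eq)
    then show ?thesis
      using z by (simp add: dilation_sum_Some incvec_def)
  qed
qed

lemma incvec_zero_infinity_in_span:
  fixes Bs :: "'a::{field,finite} option set set"
  assumes even: "even CARD('a)" and invariant: "\<forall>\<pi>\<in>PGL2. \<forall>B\<in>Bs. \<pi> ` B \<in> Bs"
    and "B \<in> Bs" "b \<in> B" "c \<notin> B"
  shows "incvec {Some 0, None} \<in> gf2.span (incvec ` Bs)"
proof -
  have "b \<noteq> c" using assms by auto
  obtain g1 where g1: "g1 \<in> PGL2" "g1 b = Some 0" "g1 c = None"
    using PGL2_to_zero_infinity[OF \<open>b \<noteq> c\<close>] by blast
  obtain g2 where g2: "g2 \<in> PGL2" "g2 c = Some 0" "g2 b = None"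
    using PGL2_to_zero_infinity[OF \<open>b \<noteq> c\<close>[symmetric]] by blast
  have inj: "inj g1" "inj g2"
    using g1(1) g2(1) by (simp_all add: bij_is_inj bij_PGL2)
  have "dilation_sum (g1 ` B) + dilation_sum (g2 ` B) = incvec {Some 0, None}"
  proof (rule dilation_sum_add_eq[OF even])
    show "card (g1 ` B) = card (g2 ` B)"
      using inj by (simp add: card_image inj_on_subset)
    show "Some 0 \<in> g1 ` B" "None \<in> g2 ` B"
      using g1(2) g2(3) \<open>b \<in> B\<close> by (metis imageI)+
    show "None \<notin> g1 ` B" "Some 0 \<notin> g2 ` B"
      using g1(3) g2(2) inj \<open>c \<notin> B\<close> by (metis inj_image_mem_iff)+
  qed
  moreover have "dilation_sum (g1 ` B) + dilation_sum (g2 ` B) \<in> gf2.span (incvec ` Bs)"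
    using invariant g1(1) g2(1) \<open>B \<in> Bs\<close>
    by (intro gf2.span_add dilation_sum_in_span) auto
  ultimately show ?thesis
    by simp
qed

lemma incvec_pair_in_span:
  fixes Bs :: "'a::{field,finite} option set set"
  assumes even: "even CARD('a)" and invariant: "\<forall>\<pi>\<in>PGL2. \<forall>B\<in>Bs. \<pi> ` B \<in> Bs"
    and "B \<in> Bs" "b \<in> B" "c \<notin> B" and "p \<noteq> q"
  shows "incvec {p, q} \<in> gf2.span (incvec ` Bs)"
proof -
  obtain g where g: "g \<in> PGL2" "g (Some 0) = p" "g None = q"
    using PGL2_from_zero_infinity[OF \<open>p \<noteq> q\<close>] by blast
  have "incvec {p, q} = incvec {Some 0, None} \<circ> inv g"
    using incvec_image_bij[OF bij_PGL2[OF g(1)], of "{Some 0, None}"] g by simp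
  also have "\<dots> \<in> gf2.span (incvec ` Bs)"
    using invariant g(1)
    by (intro span_incvec_comp_inv bij_PGL2 incvec_zero_infinity_in_span[OF even invariant assms(3-5)])
      auto
  finally show ?thesis .
qed

theorem theorem12:
  fixes Bs :: "'a::{field,finite} option set set" and m k :: nat
  assumes "card (UNIV :: 'a set) = 2 ^ m" and "m \<ge> 2"
    and "1 \<le> k" and "k \<le> 2 ^ m"
    and "Bs \<noteq> {}"
    and "\<forall>B\<in>Bs. card B = k"
    and "\<forall>\<pi>\<in>PGL2. \<forall>B\<in>Bs. \<pi> ` B \<in> Bs"
  shows "two_rank Bs = (if even k then 2 ^ m else 2 ^ m + 1)"
proof -
  have even: "even CARD('a)"
    using assms(1,2) by simp
  have points: "CARD('a option) = 2 ^ m + 1"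
    using assms(1) by simp
  obtain B where "B \<in> Bs" and "card B = k"
    using assms(5,6) by auto
  then obtain b where "b \<in> B"
    using assms(3) by fastforce
  have "B \<noteq> UNIV"
    using \<open>card B = k\<close> assms(4) points by auto
  then obtain c where "c \<notin> B" by auto
  have "incvec {p, q} \<in> gf2.span (incvec ` Bs)" if "p \<noteq> q" for p q
    by (rule incvec_pair_in_span[OF even assms(7) \<open>B \<in> Bs\<close> \<open>b \<in> B\<close> \<open>c \<notin> B\<close> that])
  then show ?thesis
    using two_rank_eq_if_pairs_in_span[OF assms(5,6)] points by simp
qed

end
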